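(* Let $a_n$, $s$ and $c$ be any integers and let $n$ be a positive integer. Then \[ \sum_{a_{n-1}=c}^{a_n}\sum_{a_{n-2}=c}^{a_{n-1}}\cdots\sum_{a_0=c}^{a_1}(-1)^{a_0}F_{3a_0+s}=(-1)^{a_n}\frac{F_{n+3a_n+s}}{2^n}+(-1)^c\sum_{j=0}^{n-1}\frac{F_{n-j+3(c-1)+s}}{2^{n-j}}\binom{a_n+j-c}{j}, \] and \[ \sum_{a_{n-1}=c}^{a_n}\sum_{a_{n-2}=c}^{a_{n-1}}\cdots\sum_{a_0=c}^{a_1}(-1)^{a_0}L_{3a_0+s}=(-1)^{a_n}\frac{L_{n+3a_n+s}}{2^n}+(-1)^c\sum_{j=0}^{n-1}\frac{L_{n-j+3(c-1)+s}}{2^{n-j}}\binom{a_n+j-c}{j}. \]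
   Context: $F_j$ and $L_j$ are the Fibonacci and Lucas numbers: $F_0=0,F_1=1$, $L_0=2,L_1=1$, both satisfying $X_j=X_{j-1}+X_{j-2}$, extended to all integer indices via the recurrence. For integers $c,m$ and a function $f$ on the integers, $\sum_{k=c}^m f(k)$ denotes the usual sum if $m\ge c$, equals $0$ if $m=c-1$, and equals $-\sum_{k=m+1}^{c-1}f(k)$ if $m\le c-2$. The nested sum $\sum_{a_{n-1}=c}^{a_n}\cdots\sum_{a_0=c}^{a_1}g(a_0)$ is the iterated sum with $n$ summation signs: innermost over $a_0$ from $c$ to $a_1$, then $a_1$ from $c$ to $a_2$, ..., outermost $a_{n-1}$ from $c$ to $a_n$. For an integer $j\ge0$ and any number $y$, $\binom{y}{j}=y(y-1)\cdots(y-j+1)/j!$. *)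

theory Defs
  imports Complex_Main
begin

fun fibn :: "nat \<Rightarrow> int" where
  "fibn 0 = 0" | "fibn (Suc 0) = 1" | "fibn (Suc (Suc n)) = fibn (Suc n) + fibn n"

fun lucn :: "nat \<Rightarrow> int" where
  "lucn 0 = 2" | "lucn (Suc 0) = 1" | "lucn (Suc (Suc n)) = lucn (Suc n) + lucn n"

text \<open>Extension to all integers via the recurrence X_{j-2} = X_j - X_{j-1}:
  F_{-k} = (-1)^(k+1) F_k and L_{-k} = (-1)^k L_k.\<close>
definition F :: "int \<Rightarrow> int" where
  "F j = (if j \<ge> 0 then fibn (nat j) else (-1) ^ (nat (-j) + 1) * fibn (nat (-j)))"

definition L :: "int \<Rightarrow> int" where
  "L j = (if j \<ge> 0 then lucn (nat j) else (-1) ^ (nat (-j)) * lucn (nat (-j)))"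

definition gsum :: "int \<Rightarrow> int \<Rightarrow> (int \<Rightarrow> real) \<Rightarrow> real" where
  "gsum c m f = (if m \<ge> c then (\<Sum>k\<in>{c..m}. f k) else - (\<Sum>k\<in>{m+1..c-1}. f k))"

fun nsum :: "nat \<Rightarrow> int \<Rightarrow> (int \<Rightarrow> real) \<Rightarrow> int \<Rightarrow> real" where
  "nsum 0 c g x = g x"
| "nsum (Suc n) c g x = gsum c x (\<lambda>a. nsum n c g a)"

end

theory Submission
  imports Defs
begin

text \<open>
  Fix any integer sequence \<open>G\<close> with \<open>G(j + 2) = G(j + 1) + G(j)\<close>. With \<open>a\<^sub>n = x\<close>, the
  nested sums \<open>S\<^sub>n(x)\<close> are characterised by \<open>S\<^sub>0(x) = (-1)\<^sup>x G(3x + s)\<close>, \<open>S\<^sub>n\<^sub>+\<^sub>1(c - 1) = 0\<close>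
  and \<open>S\<^sub>n\<^sub>+\<^sub>1(x) - S\<^sub>n\<^sub>+\<^sub>1(x - 1) = S\<^sub>n(x)\<close>, so it suffices to check these three properties
  for the right-hand side. Its backward difference splits into Pascal's rule for the
  binomial coefficients and the identity \<open>G(k + 1) + G(k - 2) = 2 G(k)\<close>, which trades the
  shift by 3 in the index of the alternating term for a factor \<open>1/2\<close>.
\<close>

lemma reflected_fib_rec:
  fixes u :: "nat \<Rightarrow> int" and \<sigma> :: int and X :: "int \<Rightarrow> int"
  assumes rec: "\<And>n. u (Suc (Suc n)) = u (Suc n) + u n"
    and u0: "u 0 = (1 + \<sigma>) * u 1" "\<sigma> * u 0 = u 0"
    and X: "\<And>j. X j = (if 0 \<le> j then u (nat j) else \<sigma> * (-1) ^ nat (-j) * u (nat (-j)))"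
  shows "X (j + 2) = X (j + 1) + X j"
proof -
  consider "0 \<le> j" | "j = -1" | "j = -2" | k where "j = - int k - 3"
  proof (cases "j < -2")
    case True
    then show ?thesis using that(4)[of "nat (- j - 3)"] by simp
  qed (use that in linarith)
  then show ?thesis
  proof cases
    case 1
    then have "nat (j + 2) = Suc (Suc (nat j))" "nat (j + 1) = Suc (nat j)" by auto
    with 1 show ?thesis by (simp add: X rec)
  next
    case 2
    with u0 show ?thesis by (simp add: X algebra_simps)
  next
    case 3
    have "u 2 = u 1 + u 0" using rec[of 0] by (simp add: numeral_2_eq_2)
    with 3 u0 show ?thesis by (simp add: X algebra_simps)
  next
    case 4
    then have "nat (- j) = Suc (Suc (Suc k))" "nat (- (j + 1)) = Suc (Suc k)"
      "nat (- (j + 2)) = Suc k" "\<not> 0 \<le> j + 2" by auto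
    with 4 show ?thesis by (simp add: X rec algebra_simps)
  qed
qed

lemma F_rec: "F (j + 2) = F (j + 1) + F j"
  by (rule reflected_fib_rec[where u = fibn and \<sigma> = "-1"]) (simp_all add: F_def)

lemma L_rec: "L (j + 2) = L (j + 1) + L j"
  by (rule reflected_fib_rec[where u = lucn and \<sigma> = 1]) (simp_all add: L_def)

lemma gsum_lower: "gsum c (c - 1) f = 0"
  by (simp add: gsum_def)

lemma gsum_diff: "gsum c x f - gsum c (x - 1) f = f x"
proof (cases "c \<le> x")
  case True
  then have "{c..x} = insert x {c..x - 1}" by auto
  with True show ?thesis by (cases "c \<le> x - 1") (simp_all add: gsum_def)
next
  case False
  then have "{x..c - 1} = insert x {x + 1..c - 1}" by auto
  with False show ?thesis by (simp add: gsum_def)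
qed

lemma gsum_eqI:
  assumes "S (c - 1) = 0" and "\<And>x. S x - S (x - 1) = f x"
  shows "S x = gsum c x f"
proof -
  define D where "D x = S x - gsum c x f" for x
  have step: "D x = D (x - 1)" for x
    using assms(2)[of x] gsum_diff[of c x f] by (simp add: D_def)
  have "D x = 0"
  proof (induction x rule: int_induct[where k = "c - 1"])
    case base
    show ?case using assms(1) by (simp add: D_def gsum_lower)
  next
    case (step1 i)
    then show ?case using step[of "i + 1"] by simp
  next
    case (step2 i)
    then show ?case using step[of i] by simp
  qed
  then show ?thesis by (simp add: D_def)
qed

lemma nsum_eqI:
  assumes "\<And>x. T 0 x = g x"
    and "\<And>n. T (Suc n) (c - 1) = 0"
    and "\<And>n x. T (Suc n) x - T (Suc n) (x - 1) = T n x"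
  shows "nsum n c g x = T n x"
proof (induction n arbitrary: x)
  case 0
  show ?case by (simp add: assms(1))
next
  case (Suc n)
  have "T (Suc n) x = gsum c x (nsum n c g)"
    by (rule gsum_eqI) (simp_all add: assms(2,3) Suc)
  then show ?case by simp
qed

definition binomial_sum :: "(nat \<Rightarrow> real) \<Rightarrow> nat \<Rightarrow> int \<Rightarrow> real" where
  "binomial_sum b n y = (\<Sum>j<n. b (n - j) * (of_int (y + int j) gchoose j))"

lemma binomial_sum_diff:
  "binomial_sum b (Suc n) y - binomial_sum b (Suc n) (y - 1) = binomial_sum b n y"
proof -
  have pascal: "(of_int (y + int (Suc j)) gchoose Suc j) - (of_int (y - 1 + int (Suc j)) gchoose Suc j)
      = (of_int (y + int j) gchoose j :: real)" for j
    using gbinomial_Suc_Suc[of "of_int (y + int j) :: real" j] by (simp add: algebra_simps)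
  have "binomial_sum b (Suc n) y - binomial_sum b (Suc n) (y - 1)
      = (\<Sum>j<Suc n. b (Suc n - j) * ((of_int (y + int j) gchoose j) - (of_int (y - 1 + int j) gchoose j)))"
    by (simp add: binomial_sum_def sum_subtractf[symmetric] right_diff_distrib)
  also have "\<dots> = (\<Sum>j<n. b (n - j) * (of_int (y + int j) gchoose j))"
    by (simp only: sum.lessThan_Suc_shift pascal) simp
  finally show ?thesis by (simp add: binomial_sum_def)
qed

lemma binomial_sum_minus_one: "binomial_sum b (Suc n) (-1) = b (Suc n)"
proof -
  have "(of_int (-1 + int (Suc j)) gchoose Suc j) = (0 :: real)" for j
    by (simp add: binomial_gbinomial[symmetric])
  then show ?thesis by (simp only: binomial_sum_def sum.lessThan_Suc_shift) simp
qed

lemma fib_rec_succ_plus_pred2: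
  fixes G :: "int \<Rightarrow> int"
  assumes rec: "\<And>j. G (j + 2) = G (j + 1) + G j"
  shows "G (k + 1) + G (k - 2) = 2 * G k"
proof -
  have "G (k + 1) = G k + G (k - 1)" using rec[of "k - 1"] by (simp add: add.commute)
  moreover have "G k = G (k - 1) + G (k - 2)" using rec[of "k - 2"] by simp
  ultimately show ?thesis by simp
qed

definition alternating_term :: "(int \<Rightarrow> int) \<Rightarrow> int \<Rightarrow> nat \<Rightarrow> int \<Rightarrow> real" where
  "alternating_term G s n x = (-1) powi x * of_int (G (int n + 3 * x + s)) / 2 ^ n"

lemma alternating_term_diff:
  assumes rec: "\<And>j. G (j + 2) = G (j + 1) + G j"
  shows "alternating_term G s (Suc n) x - alternating_term G s (Suc n) (x - 1)
    = alternating_term G s n x"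
proof -
  define k where "k = int n + 3 * x + s"
  have "alternating_term G s (Suc n) x - alternating_term G s (Suc n) (x - 1)
      = (-1) powi x * of_int (G (k + 1) + G (k - 2)) / 2 ^ Suc n"
    by (simp add: alternating_term_def k_def power_int_diff add_divide_distrib algebra_simps)
  also have "\<dots> = alternating_term G s n x"
    by (simp add: fib_rec_succ_plus_pred2[OF rec] alternating_term_def k_def)
  finally show ?thesis .
qed

definition closed_form :: "(int \<Rightarrow> int) \<Rightarrow> int \<Rightarrow> int \<Rightarrow> nat \<Rightarrow> int \<Rightarrow> real" where
  "closed_form G s c n x = alternating_term G s n x
     + (-1) powi c * binomial_sum (\<lambda>m. of_int (G (int m + 3 * (c - 1) + s)) / 2 ^ m) n (x - c)"

lemma nsum_alternating_fib_rec:
  assumes rec: "\<And>j. G (j + 2) = G (j + 1) + G j"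
  shows "nsum n c (\<lambda>a. (-1) powi a * of_int (G (3 * a + s))) x = closed_form G s c n x"
proof (rule nsum_eqI)
  show "closed_form G s c 0 x = (-1) powi x * of_int (G (3 * x + s))" for x
    by (simp add: closed_form_def alternating_term_def binomial_sum_def)
  show "closed_form G s c (Suc n) (c - 1) = 0" for n
    by (simp add: closed_form_def alternating_term_def binomial_sum_minus_one power_int_diff
        algebra_simps)
  show "closed_form G s c (Suc n) x - closed_form G s c (Suc n) (x - 1) = closed_form G s c n x"
    for n x
    using alternating_term_diff[OF rec, of s n x] binomial_sum_diff[of _ n "x - c"]
    by (simp add: closed_form_def algebra_simps)
qed

theorem theorem2:
  fixes an s c :: int and n :: nat
  assumes "n > 0"
  shows "(nsum n c (\<lambda>a. (-1) powi a * of_int (F (3 * a + s))) an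
           = (-1) powi an * of_int (F (int n + 3 * an + s)) / 2 ^ n
             + (-1) powi c * (\<Sum>j = 0..n-1. of_int (F (int n - int j + 3 * (c - 1) + s)) / 2 ^ (n - j)
                 * (real_of_int (an + int j - c) gchoose j))) \<and>
         (nsum n c (\<lambda>a. (-1) powi a * of_int (L (3 * a + s))) an
           = (-1) powi an * of_int (L (int n + 3 * an + s)) / 2 ^ n
             + (-1) powi c * (\<Sum>j = 0..n-1. of_int (L (int n - int j + 3 * (c - 1) + s)) / 2 ^ (n - j)
                 * (real_of_int (an + int j - c) gchoose j)))"
proof -
  have "closed_form G s c n an = (-1) powi an * of_int (G (int n + 3 * an + s)) / 2 ^ n
      + (-1) powi c * (\<Sum>j = 0..n-1. of_int (G (int n - int j + 3 * (c - 1) + s)) / 2 ^ (n - j)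
          * (real_of_int (an + int j - c) gchoose j))" for G
  proof -
    have "{0..n-1} = {..<n}" using assms by auto
    then show ?thesis
      by (auto simp: closed_form_def alternating_term_def binomial_sum_def of_nat_diff
          algebra_simps intro!: sum.cong)
  qed
  then show ?thesis
    using nsum_alternating_fib_rec[OF F_rec] nsum_alternating_fib_rec[OF L_rec] by simp
qed

end
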